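(* Let $b=1/2$, let $\mathcal B$ be a Hamel basis of $\mathbb{R}$ over $\mathbb{Q}$ with $b\in\mathcal B$, and let $\pi:\mathbb{R}\to[0,1]$ be defined by $\pi(x)=\lambda^x_b-\lfloor\lambda^x_b\rfloor$ if $\lambda^x_b$ is not an odd integer, and $\pi(x)=1$ if $\lambda^x_b$ is an odd integer. Suppose $\pi_1,\pi_2:\mathbb{R}\to\mathbb{R}_+$ are minimal valid functions for $I_b$ with $\pi=\tfrac12\pi_1+\tfrac12\pi_2$. Then $\pi_i(x)=\pi_i(\lambda^x_b\, b)$ for every $x\in\mathbb{R}$ and $i=1,2$.
   Context: For $b\in\mathbb{R}\setminus\mathbb{Z}$, $I_b$ is the set of finite-support functions $y:\mathbb{R}\to\mathbb{Z}_+$ (i.e. $y(x)=0$ for all but finitely many $x$) such that $\sum_{x\in\mathbb{R}} y(x)\,x\equiv b \pmod 1$. A function $\pi:\mathbb{R}\to\mathbb{R}_+$ is a (nonnegative) valid function for $I_b$ if $\sum_{x\in\mathbb{R}}\pi(x)y(x)\ge 1$ for every $y\in I_b$. A valid function $\pi:\mathbb{R}\to\mathbb{R}_+$ is minimal if there is no valid function $\pi':\mathbb{R}\to\mathbb{R}_+$ with $\pi'\ne\pi$ and $\pi'\le\pi$ pointwise; equivalently (Gomory–Johnson), $\pi\ge0$ is subadditive ($\pi(x)+\pi(y)\ge\pi(x+y)$ for all $x,y$), symmetric ($\pi(x)+\pi(b-x)=1$ for all $x$) and $\pi(z)=0$ for all $z\in\mathbb{Z}$. A Hamel basis is a basis of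 $\mathbb{R}$ as a vector space over $\mathbb{Q}$; for $x\in\mathbb{R}$, $\lambda^x_b\in\mathbb{Q}$ denotes the coefficient of the basis element $b$ in the unique expression of $x$ as a finite rational linear combination of elements of $\mathcal B$. *)

theory Defs
  imports Complex_Main
begin

definition qscale :: "rat \<Rightarrow> real \<Rightarrow> real" where
  "qscale q x = real_of_rat q * x"

definition hamel_basis :: "real set \<Rightarrow> bool" where
  "hamel_basis B \<longleftrightarrow> \<not> module.dependent qscale B \<and> module.span qscale B = UNIV"

definition hamel_coeff :: "real set \<Rightarrow> real \<Rightarrow> real \<Rightarrow> rat" where
  "hamel_coeff B x b = module.representation qscale B x b"

definition in_I :: "real \<Rightarrow> (real \<Rightarrow> nat) \<Rightarrow> bool" where
  "in_I b y \<longleftrightarrow> finite {x. y x \<noteq> 0} \<and>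
     (\<Sum>x\<in>{x. y x \<noteq> 0}. real (y x) * x) - b \<in> \<int>"

definition valid_fn :: "real \<Rightarrow> (real \<Rightarrow> real) \<Rightarrow> bool" where
  "valid_fn b \<pi> \<longleftrightarrow> (\<forall>x. \<pi> x \<ge> 0) \<and>
     (\<forall>y. in_I b y \<longrightarrow> (\<Sum>x\<in>{x. y x \<noteq> 0}. \<pi> x * real (y x)) \<ge> 1)"

definition minimal_valid_fn :: "real \<Rightarrow> (real \<Rightarrow> real) \<Rightarrow> bool" where
  "minimal_valid_fn b \<pi> \<longleftrightarrow> valid_fn b \<pi> \<and>
     \<not> (\<exists>\<pi>'. valid_fn b \<pi>' \<and> \<pi>' \<noteq> \<pi> \<and> (\<forall>x. \<pi>' x \<le> \<pi> x))"

end

theory Submission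
  imports Defs
begin

text \<open>The function \<pi> vanishes wherever the b-coordinate vanishes; since \<pi>1, \<pi>2 are nonnegative
  and average to \<pi>, they vanish there as well. Minimal valid functions are subadditive, and a
  subadditive function vanishing at z and -z is invariant under translation by z. Finally x and
  lambda_b(x) b differ by a vector z whose b-coordinate is 0, and so is that of -z.\<close>

lemma module_qscale: "module qscale"
  by unfold_locales (auto simp: qscale_def algebra_simps of_rat_add of_rat_mult)

lemma hamel_coeff_diff:
  assumes "hamel_basis B"
  shows "hamel_coeff B (x - y) b = hamel_coeff B x b - hamel_coeff B y b"
proof -
  interpret module qscale by (rule module_qscale)
  show ?thesis
    using assms representation_diff by (simp add: hamel_basis_def hamel_coeff_def)
qed

lemma hamel_coeff_uminus:
  assumes "hamel_basis B"
  shows "hamel_coeff B (- x) b = - hamel_coeff B x b"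
proof -
  interpret module qscale by (rule module_qscale)
  show ?thesis
    using assms representation_neg by (simp add: hamel_basis_def hamel_coeff_def)
qed

lemma hamel_coeff_scaled_basis:
  assumes "hamel_basis B" and "b \<in> B"
  shows "hamel_coeff B (real_of_rat q * b) b = q"
proof -
  interpret module qscale by (rule module_qscale)
  have "independent B" and "\<And>v. v \<in> span B"
    using assms(1) by (auto simp: hamel_basis_def)
  then show ?thesis
    using representation_scale[of B b q] representation_basis[OF _ assms(2)]
    by (simp add: hamel_coeff_def qscale_def)
qed

lemma hamel_coeff_diff_coordinate:
  assumes "hamel_basis B" and "b \<in> B"
  shows "hamel_coeff B (x - real_of_rat (hamel_coeff B x b) * b) b = 0"
  using assms by (simp add: hamel_coeff_diff hamel_coeff_scaled_basis)

lemma sum_support_eq_superset: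
  assumes "finite S" and "{x. y x \<noteq> 0} \<subseteq> S" and "\<And>x. y x = 0 \<Longrightarrow> g x = 0"
  shows "sum g {x. y x \<noteq> 0} = sum g S"
  by (rule sum.mono_neutral_left) (use assms in auto)

definition split_point :: "real \<Rightarrow> real \<Rightarrow> real \<Rightarrow> (real \<Rightarrow> nat) \<Rightarrow> real \<Rightarrow> nat" where
  "split_point p a c y x = (if x = p then 0 else y x) + (if x = a then y p else 0)
     + (if x = c then y p else 0)"

lemma sum_split_point:
  assumes "finite S" and "p \<in> S" "a \<in> S" "c \<in> S" and "a \<noteq> p" "c \<noteq> p"
  shows "(\<Sum>x\<in>S. real (split_point p a c y x) * f x)
    = (\<Sum>x\<in>S. real (y x) * f x) + real (y p) * (f a + f c - f p)"
proof -
  have "(\<Sum>x\<in>S. real (split_point p a c y x) * f x) = (\<Sum>x\<in>S. real (y x) * f x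
      - (if x = p then real (y p) * f p else 0) + (if x = a then real (y p) * f a else 0)
      + (if x = c then real (y p) * f c else 0))"
    using assms(5,6) by (intro sum.cong) (auto simp: split_point_def algebra_simps)
  then show ?thesis
    using assms(1-4) by (simp add: sum.distrib sum_subtractf algebra_simps)
qed

lemma in_I_split_point:
  assumes "in_I b y" and "a \<noteq> a + c" "c \<noteq> a + c"
  shows "in_I b (split_point (a + c) a c y)"
proof -
  define S where "S = {x. y x \<noteq> 0} \<union> {a, c, a + c}"
  have S: "finite S" "{x. y x \<noteq> 0} \<subseteq> S" "{x. split_point (a + c) a c y x \<noteq> 0} \<subseteq> S"
    using assms(1) by (auto simp: S_def in_I_def split_point_def)
  have "(\<Sum>x\<in>{x. split_point (a + c) a c y x \<noteq> 0}. real (split_point (a + c) a c y x) * x)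
      = (\<Sum>x\<in>S. real (split_point (a + c) a c y x) * x)"
    using S by (intro sum_support_eq_superset) auto
  also have "\<dots> = (\<Sum>x\<in>S. real (y x) * x)"
    using S assms(2,3) by (simp add: sum_split_point S_def)
  also have "\<dots> = (\<Sum>x\<in>{x. y x \<noteq> 0}. real (y x) * x)"
    using S by (intro sum_support_eq_superset[symmetric]) auto
  finally show ?thesis
    using assms(1) S finite_subset by (auto simp: in_I_def)
qed

lemma valid_fn_nonneg: "valid_fn b \<pi> \<Longrightarrow> \<pi> x \<ge> 0"
  by (simp add: valid_fn_def)

lemma minimal_valid_fn_nonneg: "minimal_valid_fn b \<pi> \<Longrightarrow> \<pi> x \<ge> 0"
  by (simp add: minimal_valid_fn_def valid_fn_def)

text \<open>The cost of y under the lowered function equals the cost under \<pi> of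
  split_point (a + c) a c y, which lies in I_b again.\<close>
lemma valid_fn_lower_at_sum:
  assumes v: "valid_fn b \<pi>" and "a \<noteq> a + c" "c \<noteq> a + c"
  shows "valid_fn b (\<pi>(a + c := \<pi> a + \<pi> c))"
  unfolding valid_fn_def
proof (intro conjI allI impI)
  fix x show "(\<pi>(a + c := \<pi> a + \<pi> c)) x \<ge> 0"
    using valid_fn_nonneg[OF v] by (simp add: add_nonneg_nonneg)
next
  fix y assume yI: "in_I b y"
  let ?p = "a + c" and ?\<pi>' = "\<pi>(a + c := \<pi> a + \<pi> c)" and ?y' = "split_point (a + c) a c y"
  define S where "S = {x. y x \<noteq> 0} \<union> {a, c, ?p}"
  have S: "finite S" "{x. y x \<noteq> 0} \<subseteq> S" "{x. ?y' x \<noteq> 0} \<subseteq> S" "?p \<in> S" "a \<in> S" "c \<in> S"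
    using yI by (auto simp: S_def in_I_def split_point_def)
  have "1 \<le> (\<Sum>x\<in>{x. ?y' x \<noteq> 0}. \<pi> x * real (?y' x))"
    using v in_I_split_point[OF yI assms(2,3)] by (simp add: valid_fn_def)
  also have "\<dots> = (\<Sum>x\<in>S. real (?y' x) * \<pi> x)"
    using S by (subst sum_support_eq_superset) (auto simp: mult.commute)
  also have "\<dots> = (\<Sum>x\<in>S. real (y x) * \<pi> x) + real (y ?p) * (\<pi> a + \<pi> c - \<pi> ?p)"
    using S assms(2,3) by (simp add: sum_split_point)
  also have "\<dots> = (\<Sum>x\<in>S. ?\<pi>' x * real (y x))"
  proof -
    have "(\<Sum>x\<in>S. ?\<pi>' x * real (y x)) = (\<Sum>x\<in>S. real (y x) * \<pi> x
        + (if x = ?p then real (y ?p) * (\<pi> a + \<pi> c - \<pi> ?p) else 0))"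
      by (intro sum.cong) (auto simp: algebra_simps)
    then show ?thesis
      using S by (simp add: sum.distrib)
  qed
  also have "\<dots> = (\<Sum>x\<in>{x. y x \<noteq> 0}. ?\<pi>' x * real (y x))"
    using S by (intro sum_support_eq_superset[symmetric]) auto
  finally show "(\<Sum>x\<in>{x. y x \<noteq> 0}. ?\<pi>' x * real (y x)) \<ge> 1" .
qed

lemma minimal_valid_fn_subadditive:
  assumes m: "minimal_valid_fn b \<pi>"
  shows "\<pi> (a + c) \<le> \<pi> a + \<pi> c"
proof (rule ccontr)
  assume lt: "\<not> \<pi> (a + c) \<le> \<pi> a + \<pi> c"
  then have "a \<noteq> a + c" "c \<noteq> a + c"
    using minimal_valid_fn_nonneg[OF m, of a] minimal_valid_fn_nonneg[OF m, of c] by auto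
  then have "valid_fn b (\<pi>(a + c := \<pi> a + \<pi> c))"
    using m valid_fn_lower_at_sum by (simp add: minimal_valid_fn_def)
  moreover have "\<pi>(a + c := \<pi> a + \<pi> c) \<noteq> \<pi>" and "\<forall>x. (\<pi>(a + c := \<pi> a + \<pi> c)) x \<le> \<pi> x"
    using lt by (auto simp: fun_eq_iff)
  ultimately show False
    using m by (auto simp: minimal_valid_fn_def)
qed

lemma subadditive_translation_invariant:
  fixes f :: "'a::ab_group_add \<Rightarrow> real"
  assumes "\<And>u v. f (u + v) \<le> f u + f v" and "f z = 0" and "f (- z) = 0"
  shows "f (x + z) = f x"
proof -
  have "f (x + z) \<le> f x" using assms(1)[of x z] assms(2) by linarith
  moreover have "f x \<le> f (x + z)" using assms(1)[of "x + z" "- z"] assms(3) by simp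
  ultimately show ?thesis by simp
qed

theorem mainTheorem2:
  fixes B :: "real set" and \<pi> \<pi>1 \<pi>2 :: "real \<Rightarrow> real" and b :: real
  assumes b_def: "b = 1/2"
    and hB: "hamel_basis B" and bB: "b \<in> B"
    and \<pi>_def: "\<And>x. \<pi> x = (if \<exists>k::int. odd k \<and> hamel_coeff B x b = of_int k then 1
                   else real_of_rat (hamel_coeff B x b - of_int \<lfloor>hamel_coeff B x b\<rfloor>))"
    and m1: "minimal_valid_fn b \<pi>1" and m2: "minimal_valid_fn b \<pi>2"
    and comb: "\<And>x. \<pi> x = \<pi>1 x / 2 + \<pi>2 x / 2"
  shows "\<forall>x. \<pi>1 x = \<pi>1 (real_of_rat (hamel_coeff B x b) * b) \<and>
             \<pi>2 x = \<pi>2 (real_of_rat (hamel_coeff B x b) * b)"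
proof
  fix x
  have vanish: "\<pi>1 z = 0 \<and> \<pi>2 z = 0" if "hamel_coeff B z b = 0" for z
    using \<pi>_def[of z] that comb[of z]
      minimal_valid_fn_nonneg[OF m1, of z] minimal_valid_fn_nonneg[OF m2, of z] by auto
  define w where "w = real_of_rat (hamel_coeff B x b) * b"
  have coeff_diff: "hamel_coeff B (x - w) b = 0"
    using hamel_coeff_diff_coordinate[OF hB bB] by (simp add: w_def)
  have coeff_neg_diff: "hamel_coeff B (- (x - w)) b = 0"
    using coeff_diff hamel_coeff_uminus[OF hB, of "x - w"] by (simp only: neg_equal_0_iff_equal)
  note z = vanish[OF coeff_diff] vanish[OF coeff_neg_diff]
  have "\<pi>1 (w + (x - w)) = \<pi>1 w"
    by (rule subadditive_translation_invariant[OF minimal_valid_fn_subadditive[OF m1] z(1)[THEN conjunct1] z(2)[THEN conjunct1]])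
  moreover have "\<pi>2 (w + (x - w)) = \<pi>2 w"
    by (rule subadditive_translation_invariant[OF minimal_valid_fn_subadditive[OF m2] z(1)[THEN conjunct2] z(2)[THEN conjunct2]])
  ultimately show "\<pi>1 x = \<pi>1 (real_of_rat (hamel_coeff B x b) * b) \<and>
             \<pi>2 x = \<pi>2 (real_of_rat (hamel_coeff B x b) * b)"
    by (simp add: w_def)
qed

end
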